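(* Let $K$ be a compact Hausdorff space and $X$ a C-rich subspace of $C(K)$ (real or complex). Then $n_L(X)=1$.
   Context: $C(K)$ is the Banach space of continuous scalar-valued functions on $K$ with the sup norm. A closed subspace $X$ of $C(K)$ is C-rich if for every nonempty open $U\subset K$ and every $\varepsilon>0$ there is a nonnegative function $h\in C(K)$ with $\|h\|=1$ and $\mathrm{supp}(h)\subset U$ such that $\mathrm{dist}(h,X)<\varepsilon$. For a Banach space $X$: $\mathrm{Lip}_0(X)$ is the set of Lipschitz maps $T:X\to X$ with $T(0)=0$, with $\|T\|_L=\sup\{\|Tx-Ty\|/\|x-y\|: x\neq y\}$; $D(x)=\{x^*\in X^*: x^*(x)=\|x^*\|\|x\|=\|x\|^2\}$; $\omega(T)=\sup\{|f(Tx-Ty)|/\|x-y\|^2: x\neq y,\ f\in D(x-y)\}$; $n_L(X)=\inf\{\omega(T): T\in\mathrm{Lip}_0(X),\ \|T\|_L=1\}$. *)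

theory Defs
  imports "HOL-Analysis.Analysis"
begin

text \<open>C(K) is modelled as the bounded continuous functions from K to 'f on a compact
  Hausdorff type 'k (so all continuous functions are bounded), with the sup norm.\<close>

definition scaleF :: "'f::real_normed_field \<Rightarrow> ('a::topological_space \<Rightarrow>\<^sub>C 'f) \<Rightarrow> ('a \<Rightarrow>\<^sub>C 'f)" where
  "scaleF c g = Bcontfun (\<lambda>x. c * apply_bcontfun g x)"

definition closed_subspaceF :: "('a::topological_space \<Rightarrow>\<^sub>C 'f::real_normed_field) set \<Rightarrow> bool" where
  "closed_subspaceF X \<longleftrightarrow> 0 \<in> X \<and> (\<forall>f\<in>X. \<forall>g\<in>X. f + g \<in> X) \<and>
     (\<forall>c. \<forall>f\<in>X. scaleF c f \<in> X) \<and> closed X"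

definition C_rich :: "('a::topological_space \<Rightarrow>\<^sub>C 'f::real_normed_field) set \<Rightarrow> bool" where
  "C_rich X \<longleftrightarrow> closed_subspaceF X \<and>
     (\<forall>U. open U \<and> U \<noteq> {} \<longrightarrow> (\<forall>\<epsilon>>0. \<exists>h.
        (\<forall>t. \<exists>r\<ge>0. apply_bcontfun h t = of_real r) \<and> norm h = 1 \<and>
        closure {t. apply_bcontfun h t \<noteq> 0} \<subseteq> U \<and> infdist h X < \<epsilon>))"

text \<open>Elements of the dual X^* (functionals considered on X only).\<close>
definition dualF :: "('a::topological_space \<Rightarrow>\<^sub>C 'f::real_normed_field) set
    \<Rightarrow> (('a \<Rightarrow>\<^sub>C 'f) \<Rightarrow> 'f) set" where
  "dualF X = {\<phi>. (\<forall>x\<in>X. \<forall>y\<in>X. \<phi> (x + y) = \<phi> x + \<phi> y) \<and>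
                 (\<forall>c. \<forall>x\<in>X. \<phi> (scaleF c x) = c * \<phi> x) \<and>
                 (\<exists>C. \<forall>x\<in>X. norm (\<phi> x) \<le> C * norm x)}"

definition dual_norm :: "('a::topological_space \<Rightarrow>\<^sub>C 'f::real_normed_field) set
    \<Rightarrow> (('a \<Rightarrow>\<^sub>C 'f) \<Rightarrow> 'f) \<Rightarrow> real" where
  "dual_norm X \<phi> = Sup {norm (\<phi> x) | x. x \<in> X \<and> norm x \<le> 1}"

definition Dset :: "('a::topological_space \<Rightarrow>\<^sub>C 'f::real_normed_field) set
    \<Rightarrow> ('a \<Rightarrow>\<^sub>C 'f) \<Rightarrow> (('a \<Rightarrow>\<^sub>C 'f) \<Rightarrow> 'f) set" where
  "Dset X x = {\<phi> \<in> dualF X. \<phi> x = of_real (dual_norm X \<phi> * norm x) \<and>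
                              dual_norm X \<phi> * norm x = (norm x)\<^sup>2}"

definition Lip0 :: "('a::topological_space \<Rightarrow>\<^sub>C 'f::real_normed_field) set
    \<Rightarrow> (('a \<Rightarrow>\<^sub>C 'f) \<Rightarrow> ('a \<Rightarrow>\<^sub>C 'f)) set" where
  "Lip0 X = {T. T ` X \<subseteq> X \<and> T 0 = 0 \<and> (\<exists>C. C-lipschitz_on X T)}"

definition lip_norm :: "('a::topological_space \<Rightarrow>\<^sub>C 'f::real_normed_field) set
    \<Rightarrow> (('a \<Rightarrow>\<^sub>C 'f) \<Rightarrow> ('a \<Rightarrow>\<^sub>C 'f)) \<Rightarrow> real" where
  "lip_norm X T = Sup {norm (T x - T y) / norm (x - y) | x y. x \<in> X \<and> y \<in> X \<and> x \<noteq> y}"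

definition omega :: "('a::topological_space \<Rightarrow>\<^sub>C 'f::real_normed_field) set
    \<Rightarrow> (('a \<Rightarrow>\<^sub>C 'f) \<Rightarrow> ('a \<Rightarrow>\<^sub>C 'f)) \<Rightarrow> real" where
  "omega X T = Sup {norm (\<phi> (T x - T y)) / (norm (x - y))\<^sup>2 | x y \<phi>.
                     x \<in> X \<and> y \<in> X \<and> x \<noteq> y \<and> \<phi> \<in> Dset X (x - y)}"

definition nL :: "('a::topological_space \<Rightarrow>\<^sub>C 'f::real_normed_field) set \<Rightarrow> real" where
  "nL X = Inf {omega X T | T. T \<in> Lip0 X \<and> lip_norm X T = 1}"

end

theory Submission
  imports Defs
begin

text \<open>
  Since \<open>\<omega>(T) \<le> \<parallel>T\<parallel>\<^sub>L\<close> always and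
  the identity has \<open>\<omega> = 1\<close>, the claim \<open>n\<^sub>L(X) = 1\<close> amounts to showing \<open>\<omega>(T) \<ge> 1\<close> whenever
  \<open>\<parallel>T\<parallel>\<^sub>L = 1\<close>.  Pick \<open>u, v\<close> with \<open>\<parallel>T u - T v\<parallel> > (1 - \<eta>)\<parallel>u - v\<parallel>\<close> and let \<open>t\<^sub>0\<close> be a point where
  \<open>T u - T v\<close> attains its norm.  C-richness provides \<open>g \<in> X\<close> close to a peak function supported
  in a small neighbourhood \<open>U\<close> of \<open>t\<^sub>0\<close>; adding a multiple of \<open>g\<close> to \<open>d = u - v\<close> gives \<open>e \<in> X\<close>
  that attains its norm at some \<open>s \<in> U\<close> and a point \<open>x = v + \<alpha> e\<close> close to \<open>u\<close>.  Evaluation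
  at \<open>s\<close> is a supporting functional of \<open>x - v\<close>, and since \<open>T u - T x\<close> is small, it shows that
  \<open>\<omega>(T) \<ge> 1 - 40\<eta>\<close>.
\<close>

lemma scaleF_apply [simp]:
  "apply_bcontfun (scaleF c g) x = c * apply_bcontfun g x"
proof -
  have "(\<lambda>x. c * apply_bcontfun g x) \<in> bcontfun"
    by (rule bcontfun_normI[where b = "norm c * norm g"])
       (auto intro!: continuous_intros mult_left_mono norm_bounded simp: norm_mult)
  then show ?thesis
    unfolding scaleF_def by (simp add: Bcontfun_inverse)
qed

lemma norm_scaleF:
  fixes g :: "'a::topological_space \<Rightarrow>\<^sub>C 'f::real_normed_field"
  shows "norm (scaleF c g) = norm c * norm g"
proof (cases "c = 0")
  case True
  have "scaleF c g = 0"
    using True by (intro bcontfun_eqI) simp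
  then show ?thesis using True by simp
next
  case False
  have "norm (scaleF c g) \<le> norm c * norm g"
    by (rule norm_bound) (auto simp: norm_mult intro!: mult_left_mono norm_bounded)
  moreover have "norm g \<le> norm (scaleF c g) / norm c"
  proof (rule norm_bound)
    fix x
    have "norm c * norm (g x) \<le> norm (scaleF c g)"
      using norm_bounded[of "scaleF c g" x] by (simp add: norm_mult)
    then show "norm (g x) \<le> norm (scaleF c g) / norm c"
      using False by (simp add: field_simps)
  qed
  ultimately show ?thesis
    using False by (simp add: field_simps)
qed

lemma attains_norm:
  fixes f :: "'k::topological_space \<Rightarrow>\<^sub>C 'b::real_normed_vector"
  assumes "compact (UNIV :: 'k set)"
  obtains t where "norm (f t) = norm f"
proof -
  have "continuous_on UNIV (\<lambda>t. norm (f t))"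
    by (intro continuous_intros) auto
  from continuous_attains_sup[OF assms _ this] obtain t
    where t: "\<And>y. norm (f y) \<le> norm (f t)" by auto
  have "norm f \<le> norm (f t)"
    by (rule norm_bound) (use t in auto)
  with norm_bounded[of f t] that show ?thesis by auto
qed

lemma closed_subspaceF_closed_ops:
  assumes "closed_subspaceF X"
  shows subspace_zero: "0 \<in> X"
    and subspace_add: "f \<in> X \<Longrightarrow> g \<in> X \<Longrightarrow> f + g \<in> X"
    and subspace_scale: "f \<in> X \<Longrightarrow> scaleF c f \<in> X"
    and subspace_diff: "f \<in> X \<Longrightarrow> g \<in> X \<Longrightarrow> f - g \<in> X"
proof -
  show "0 \<in> X" "f \<in> X \<Longrightarrow> g \<in> X \<Longrightarrow> f + g \<in> X" "f \<in> X \<Longrightarrow> scaleF c f \<in> X"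
    using assms by (auto simp: closed_subspaceF_def)
  have "f - g = f + scaleF (-1) g"
    by (rule bcontfun_eqI) simp
  with assms show "f \<in> X \<Longrightarrow> g \<in> X \<Longrightarrow> f - g \<in> X"
    unfolding closed_subspaceF_def by metis
qed

lemma infdist_less_obtain:
  assumes "infdist x A < e" "A \<noteq> {}"
  obtains a where "a \<in> A" "dist x a < e"
  using assms by (auto simp: infdist_notempty cINF_less_iff)

lemma dualF_zero:
  assumes "closed_subspaceF X" "\<phi> \<in> dualF X"
  shows "\<phi> 0 = 0"
proof -
  have "\<phi> (0 + 0) = \<phi> 0 + \<phi> 0"
    using assms(2) subspace_zero[OF assms(1)] unfolding dualF_def by blast
  then show ?thesis by simp
qed

lemma dual_norm_bdd:
  assumes "\<phi> \<in> dualF X"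
  shows "bdd_above {norm (\<phi> x) | x. x \<in> X \<and> norm x \<le> 1}"
proof -
  obtain C where C: "\<And>x. x \<in> X \<Longrightarrow> norm (\<phi> x) \<le> C * norm x"
    using assms unfolding dualF_def by blast
  have "norm (\<phi> x) \<le> \<bar>C\<bar>" if "x \<in> X" "norm x \<le> 1" for x
  proof -
    have "norm (\<phi> x) \<le> \<bar>C\<bar> * norm x"
      using C[OF that(1)] by (simp add: order_trans[OF _ mult_right_mono])
    also have "\<dots> \<le> \<bar>C\<bar>"
      using that by (simp add: mult_left_le)
    finally show ?thesis .
  qed
  then show ?thesis by (auto intro!: bdd_aboveI[where M = "\<bar>C\<bar>"])
qed

lemma dual_norm_bound:
  fixes X :: "('a::topological_space \<Rightarrow>\<^sub>C 'f::real_normed_field) set"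
  assumes X: "closed_subspaceF X" and \<phi>: "\<phi> \<in> dualF X" and f: "f \<in> X"
  shows "norm (\<phi> f) \<le> dual_norm X \<phi> * norm f"
proof (cases "f = 0")
  case True
  then show ?thesis using dualF_zero[OF X \<phi>] by simp
next
  case False
  define f' where "f' = scaleF (of_real (1 / norm f)) f"
  have "f' \<in> X" "norm f' = 1"
    using X f False by (simp_all add: f'_def subspace_scale norm_scaleF norm_divide)
  then have "norm (\<phi> f') \<le> dual_norm X \<phi>"
    unfolding dual_norm_def by (intro cSup_upper dual_norm_bdd[OF \<phi>]) auto
  moreover have "norm (\<phi> f') = norm (\<phi> f) / norm f"
    using \<phi> f by (simp add: dualF_def f'_def norm_mult norm_divide)
  ultimately show ?thesis
    using False by (simp add: field_simps)
qed

text \<open>If a nonzero \<open>e\<close> attains its norm at \<open>s\<close>, then the suitably scaled evaluation at \<open>s\<close>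
  lies in \<open>D(e)\<close>: these are the only supporting functionals the proof needs.\<close>

definition peak_eval :: "('a::topological_space \<Rightarrow>\<^sub>C 'f::real_normed_field) \<Rightarrow> 'a
    \<Rightarrow> ('a \<Rightarrow>\<^sub>C 'f) \<Rightarrow> 'f" where
  "peak_eval e s = (\<lambda>f. (of_real ((norm e)\<^sup>2) / e s) * f s)"

lemma peak_eval_norm:
  assumes "norm (apply_bcontfun e s) = norm e" "e \<noteq> 0"
  shows "norm (peak_eval e s f) = norm e * norm (apply_bcontfun f s)"
  using assms by (simp add: peak_eval_def norm_mult norm_divide power2_eq_square)

lemma peak_eval_Dset:
  fixes X :: "('a::topological_space \<Rightarrow>\<^sub>C 'f::real_normed_field) set"
  assumes X: "closed_subspaceF X" and e: "e \<in> X" "e \<noteq> 0"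
    and s: "norm (e s) = norm e"
  shows "peak_eval e s \<in> Dset X e"
proof -
  have es: "e s \<noteq> 0"
    using s e by auto
  note nv = peak_eval_norm[OF s e(2)]
  have lin: "peak_eval e s \<in> dualF X"
    unfolding dualF_def
  proof (intro CollectI conjI ballI allI)
    show "peak_eval e s (x + y) = peak_eval e s x + peak_eval e s y" for x y
      by (simp add: peak_eval_def algebra_simps add_divide_distrib)
    show "peak_eval e s (scaleF c x) = c * peak_eval e s x" for c x
      by (simp add: peak_eval_def algebra_simps)
    show "\<exists>C. \<forall>x\<in>X. norm (peak_eval e s x) \<le> C * norm x"
      by (rule exI[of _ "norm e"]) (auto simp: nv intro!: mult_left_mono norm_bounded)
  qed
  have "dual_norm X (peak_eval e s) = norm e"
    unfolding dual_norm_def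
  proof (rule cSup_eq_maximum)
    define e' where "e' = scaleF (of_real (1 / norm e)) e"
    have "e' \<in> X" "norm e' = 1" "norm (peak_eval e s e') = norm e"
      using X e s by (simp_all add: subspace_scale e'_def norm_scaleF norm_divide nv norm_mult)
    then show "norm e \<in> {norm (peak_eval e s x) |x. x \<in> X \<and> norm x \<le> 1}"
      by force
  next
    fix y assume "y \<in> {norm (peak_eval e s x) |x. x \<in> X \<and> norm x \<le> 1}"
    then obtain x where "norm x \<le> 1" "y = norm (peak_eval e s x)" by auto
    moreover have "norm (x s) \<le> 1"
      using norm_bounded[of x s] \<open>norm x \<le> 1\<close> by simp
    ultimately show "y \<le> norm e" by (simp add: nv mult_left_le)
  qed
  moreover have "peak_eval e s e = of_real ((norm e)\<^sup>2)"
    using es by (simp add: peak_eval_def)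
  ultimately show ?thesis
    using lin by (simp add: Dset_def power2_eq_square)
qed

lemma omega_witness:
  fixes X :: "('a::topological_space \<Rightarrow>\<^sub>C 'f::real_normed_field) set"
    and T :: "('a \<Rightarrow>\<^sub>C 'f) \<Rightarrow> ('a \<Rightarrow>\<^sub>C 'f)"
  assumes X: "closed_subspaceF X" and xy: "x \<in> X" "y \<in> X" "x \<noteq> y"
    and s: "norm ((x - y) s) = norm (x - y)"
    and bound: "\<beta> * norm (x - y) \<le> norm ((T x - T y) s)"
  shows "\<exists>\<phi>. \<phi> \<in> Dset X (x - y) \<and> \<beta> \<le> norm (\<phi> (T x - T y)) / (norm (x - y))\<^sup>2"
proof (intro exI conjI)
  have ne: "x - y \<noteq> 0" using xy by simp
  show "peak_eval (x - y) s \<in> Dset X (x - y)"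
    using X xy ne s by (intro peak_eval_Dset subspace_diff) auto
  show "\<beta> \<le> norm (peak_eval (x - y) s (T x - T y)) / (norm (x - y))\<^sup>2"
    using bound ne by (simp add: peak_eval_norm[OF s ne] power2_eq_square field_simps)
qed

lemma lip_norm_one:
  assumes T: "T \<in> Lip0 X" "lip_norm X T = 1"
    and pair: "x0 \<in> X" "y0 \<in> X" "x0 \<noteq> y0"
  shows lip_norm_one_nonexpansive: "x \<in> X \<Longrightarrow> y \<in> X \<Longrightarrow> norm (T x - T y) \<le> norm (x - y)"
    and lip_norm_one_almost_attained:
      "0 < \<epsilon> \<Longrightarrow> \<exists>u\<in>X. \<exists>v\<in>X. u \<noteq> v \<and> (1 - \<epsilon>) * norm (u - v) < norm (T u - T v)"
proof -
  define Q where "Q = {norm (T x - T y) / norm (x - y) | x y. x \<in> X \<and> y \<in> X \<and> x \<noteq> y}"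
  have Q_ne: "Q \<noteq> {}"
    unfolding Q_def using pair by blast
  obtain C where C: "C-lipschitz_on X T"
    using T(1) by (auto simp: Lip0_def)
  have "q \<le> C" if "q \<in> Q" for q
  proof -
    obtain x y where xy: "x \<in> X" "y \<in> X" "x \<noteq> y" "q = norm (T x - T y) / norm (x - y)"
      using \<open>q \<in> Q\<close> unfolding Q_def by blast
    have "norm (T x - T y) \<le> C * norm (x - y)"
      using C xy by (simp add: lipschitz_on_def dist_norm)
    then show "q \<le> C" using xy by (simp add: divide_le_eq)
  qed
  then have Q_bdd: "bdd_above Q" by (rule bdd_aboveI)
  have Sup_Q: "Sup Q = 1"
    using T(2) by (simp add: lip_norm_def Q_def)
  show "norm (T x - T y) \<le> norm (x - y)" if "x \<in> X" "y \<in> X"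
  proof (cases "x = y")
    case False
    then have "norm (T x - T y) / norm (x - y) \<in> Q"
      unfolding Q_def using that by blast
    then have "norm (T x - T y) / norm (x - y) \<le> 1"
      using cSup_upper[OF _ Q_bdd] Sup_Q by metis
    then show ?thesis using False by (simp add: divide_le_eq)
  qed simp
  show "\<exists>u\<in>X. \<exists>v\<in>X. u \<noteq> v \<and> (1 - \<epsilon>) * norm (u - v) < norm (T u - T v)" if "0 < \<epsilon>"
  proof -
    have "1 - \<epsilon> < Sup Q" using Sup_Q that by simp
    then obtain q where "q \<in> Q" "1 - \<epsilon> < q"
      using less_cSup_iff[OF Q_ne Q_bdd] by blast
    then show ?thesis
      unfolding Q_def by (auto simp: less_divide_eq) blast
  qed
qed

lemma omega_quotient_le_one:
  fixes X :: "('a::topological_space \<Rightarrow>\<^sub>C 'f::real_normed_field) set"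
  assumes X: "closed_subspaceF X" and TX: "\<And>x. x \<in> X \<Longrightarrow> T x \<in> X"
    and nonexp: "\<And>x y. x \<in> X \<Longrightarrow> y \<in> X \<Longrightarrow> norm (T x - T y) \<le> norm (x - y)"
    and xy: "x \<in> X" "y \<in> X" "x \<noteq> y" and \<phi>: "\<phi> \<in> Dset X (x - y)"
  shows "norm (\<phi> (T x - T y)) / (norm (x - y))\<^sup>2 \<le> 1"
proof -
  have pos: "norm (x - y) > 0" using xy by simp
  have "\<phi> \<in> dualF X" and "dual_norm X \<phi> * norm (x - y) = (norm (x - y))\<^sup>2"
    using \<phi> by (auto simp: Dset_def)
  then have \<phi>_dual: "\<phi> \<in> dualF X" and \<phi>_norm: "dual_norm X \<phi> = norm (x - y)"
    using pos by (auto simp: power2_eq_square)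
  have "norm (\<phi> (T x - T y)) \<le> dual_norm X \<phi> * norm (T x - T y)"
    using xy by (intro dual_norm_bound[OF X \<phi>_dual] subspace_diff[OF X] TX)
  also have "\<dots> \<le> norm (x - y) * norm (x - y)"
    unfolding \<phi>_norm using nonexp xy by (intro mult_left_mono) auto
  finally show ?thesis
    using pos by (simp add: power2_eq_square divide_le_eq)
qed

lemma Sup_eq_one_by_approximation:
  fixes W :: "real set"
  assumes le: "\<And>w. w \<in> W \<Longrightarrow> w \<le> 1" and approx: "\<And>\<epsilon>. 0 < \<epsilon> \<Longrightarrow> \<exists>w\<in>W. 1 - \<epsilon> \<le> w"
  shows "Sup W = 1"
proof (rule cSup_eq_non_empty)
  show "W \<noteq> {}" using approx[of 1] by auto
  show "1 \<le> y" if "\<And>w. w \<in> W \<Longrightarrow> w \<le> y" for y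
  proof (rule field_le_epsilon)
    fix \<epsilon> :: real assume "0 < \<epsilon>"
    then obtain w where "w \<in> W" "1 - \<epsilon> \<le> w" using approx by blast
    then show "1 \<le> y + \<epsilon>" using that by fastforce
  qed
qed (fact le)

section \<open>Approximate peak functions in C-rich subspaces\<close>

lemma C_rich_peak:
  fixes X :: "('k::topological_space \<Rightarrow>\<^sub>C 'f::real_normed_field) set"
  assumes K: "compact (UNIV :: 'k set)" and CR: "C_rich X"
    and U: "open U" "U \<noteq> {}" and \<eta>: "0 < \<eta>"
  obtains g \<rho> t1 where "g \<in> X" "t1 \<in> U" "\<rho> t1 = 1"
    and "\<And>t. 0 \<le> \<rho> t" "\<And>t. \<rho> t \<le> 1" "\<And>t. t \<notin> U \<Longrightarrow> \<rho> t = 0"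
    and "\<And>t. norm (g t - of_real (\<rho> t)) < \<eta>"
proof -
  obtain h where h_nonneg: "\<forall>t. \<exists>r\<ge>0. apply_bcontfun h t = of_real r" and h_norm: "norm h = 1"
    and h_supp: "closure {t. apply_bcontfun h t \<noteq> 0} \<subseteq> U" and h_dist: "infdist h X < \<eta>"
    using CR U \<eta> unfolding C_rich_def by blast
  define \<rho> where "\<rho> t = norm (h t)" for t
  have h_eq: "h t = of_real (\<rho> t)" for t
    using h_nonneg by (metis \<rho>_def abs_of_nonneg norm_of_real)
  have "X \<noteq> {}"
    using CR by (auto simp: C_rich_def closed_subspaceF_def)
  then obtain g where "g \<in> X" and "dist h g < \<eta>"
    using infdist_less_obtain[OF h_dist] by blast
  then have close: "norm (g t - of_real (\<rho> t)) < \<eta>" for t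
    using dist_fun_lt_imp_dist_val_lt[of h g \<eta> t] by (simp add: h_eq dist_norm norm_minus_commute)
  have off_U: "\<rho> t = 0" if "t \<notin> U" for t
    using that h_supp closure_subset[of "{t. apply_bcontfun h t \<noteq> 0}"] by (auto simp: \<rho>_def)
  obtain t1 where "norm (h t1) = 1"
    using attains_norm[OF K, of h] h_norm by auto
  then have "\<rho> t1 = 1" "t1 \<in> U"
    using off_U[of t1] by (auto simp: \<rho>_def)
  moreover have "\<rho> t \<le> 1" for t
    using norm_bounded[of h t] h_norm by (simp add: \<rho>_def)
  ultimately show ?thesis
    using that[OF \<open>g \<in> X\<close>] close off_U by (auto simp: \<rho>_def)
qed

lemma C_rich_nontrivial:
  fixes X :: "('k::topological_space \<Rightarrow>\<^sub>C 'f::real_normed_field) set"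
  assumes K: "compact (UNIV :: 'k set)" and CR: "C_rich X"
  obtains g where "g \<in> X" "g \<noteq> 0"
proof -
  obtain g \<rho> t1 where "g \<in> X" "\<rho> t1 = 1" "norm (g t1 - of_real (\<rho> t1)) < 1"
    using C_rich_peak[OF K CR open_UNIV UNIV_not_empty zero_less_one] by metis
  moreover have "g \<noteq> 0"
    using calculation by auto
  ultimately show ?thesis using that by blast
qed

section \<open>Perturbing a function by a multiple of a peak\<close>

lemma peak_perturbation_scalar:
  fixes p w q :: "'f::real_normed_field"
  assumes "norm p = 1" "0 \<le> r" "r \<le> 1" "\<bar>m\<bar> \<le> \<kappa>" "\<bar>m + c\<bar> \<le> \<kappa>"
  shows "norm (of_real m * p + w + of_real c * p * (of_real r + q)) \<le> \<kappa> + norm w + \<bar>c\<bar> * norm q"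
proof -
  have "m + c * r = (1 - r) * m + r * (m + c)"
    by (simp add: algebra_simps)
  also have "\<bar>\<dots>\<bar> \<le> (1 - r) * \<kappa> + r * \<kappa>"
    using assms(2-5) by (intro order_trans[OF abs_triangle_ineq] add_mono)
      (auto simp: abs_mult intro: mult_left_mono)
  finally have mid: "\<bar>m + c * r\<bar> \<le> \<kappa>"
    by (simp add: algebra_simps)
  have "of_real m * p + w + of_real c * p * (of_real r + q)
      = of_real (m + c * r) * p + w + of_real c * p * q"
    by (simp add: algebra_simps)
  also have "norm \<dots> \<le> norm (of_real (m + c * r) * p) + norm w + norm (of_real c * p * q)"
    by (meson norm_triangle_ineq add_mono order_trans order_refl)
  also have "\<dots> \<le> \<kappa> + norm w + \<bar>c\<bar> * norm q"
    using assms(1) mid by (simp add: norm_mult del: of_real_add of_real_mult)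
  finally show ?thesis .
qed

text \<open>With
  \<open>d(t\<^sub>1) = m p\<close> and \<open>\<kappa> = (1 + 5\<eta>)\<parallel>d\<parallel>\<close>, adding \<open>c p g\<close> to \<open>d\<close> increases its norm by at most
  \<open>10\<eta>\<parallel>d\<parallel>\<close> for every \<open>c \<in> [-(\<kappa> + m), \<kappa> - m]\<close>; for \<open>c = \<kappa> - m\<close> the result is small off \<open>U\<close>
  but large at \<open>t\<^sub>1\<close>, so it attains its norm inside \<open>U\<close>.\<close>

lemma peak_perturbation:
  fixes d g :: "'a::topological_space \<Rightarrow>\<^sub>C 'f::real_normed_field"
  assumes \<eta>: "0 < \<eta>" "\<eta> \<le> 1/40" and d: "d \<noteq> 0"
    and t1: "t1 \<in> U" "\<rho> t1 = 1"
    and \<rho>: "\<And>t. 0 \<le> \<rho> t" "\<And>t. \<rho> t \<le> 1" "\<And>t. t \<notin> U \<Longrightarrow> \<rho> t = 0"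
    and g: "\<And>t. norm (g t - of_real (\<rho> t)) < \<eta>"
    and osc: "\<And>t. t \<in> U \<Longrightarrow> norm (d t - d t1) \<le> 2 * \<eta> * norm d"
    and p: "norm p = 1" "d t1 = of_real (norm (d t1)) * p"
  defines "\<kappa> \<equiv> (1 + 5 * \<eta>) * norm d" and "m \<equiv> norm (d t1)"
  shows peak_perturbation_bound: "-(\<kappa> + m) \<le> c \<Longrightarrow> c \<le> \<kappa> - m \<Longrightarrow>
      norm (d t + of_real c * p * g t) \<le> norm d * (1 + 10 * \<eta>)"
    and peak_perturbation_off: "t \<notin> U \<Longrightarrow>
      norm (d t + of_real (\<kappa> - m) * p * g t) \<le> norm d * (1 + 2 * \<eta>)"
    and peak_perturbation_peak: "norm d * (1 + 2 * \<eta>) < norm (d t1 + of_real (\<kappa> - m) * p * g t1)"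
proof -
  define D where "D = norm d"
  define E where "E = \<eta> * D"
  define q where "q t = g t - of_real (\<rho> t)" for t
  have D: "0 < D" "m \<le> D" "0 \<le> m"
    using d norm_bounded[of d t1] by (auto simp: D_def m_def)
  have E: "0 < E" "\<kappa> = D + 5 * E" "D * (1 + 10 * \<eta>) = D + 10 * E" "D * (1 + 2 * \<eta>) = D + 2 * E"
    using \<eta> D by (auto simp: E_def D_def \<kappa>_def algebra_simps)
  have "\<eta> * E \<le> (1/40) * E"
    using \<eta> E by (intro mult_right_mono) auto
  then have \<kappa>\<eta>: "\<kappa> * \<eta> \<le> E + E / 8"
    by (simp add: \<kappa>_def E_def D_def algebra_simps)
  have g_split: "g t = of_real (\<rho> t) + q t" and q: "norm (q t) \<le> \<eta>" for t
    using g[of t] by (auto simp: q_def)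
  have small_q: "\<bar>c\<bar> * norm (q t) \<le> C * \<eta>" if "\<bar>c\<bar> \<le> C" for c C t
    using that q[of t] by (intro mult_mono) auto
  have off: "norm (d t + of_real c * p * g t) \<le> D + \<bar>c\<bar> * norm (q t)" if "t \<notin> U" for t c
  proof -
    have "norm (d t + of_real c * p * g t) \<le> norm (d t) + norm (of_real c * p * q t)"
      using g_split[of t] \<rho>(3)[OF that] by (simp add: norm_triangle_ineq)
    then show ?thesis
      using norm_bounded[of d t] p(1) by (simp add: D_def norm_mult)
  qed
  show "norm (d t + of_real c * p * g t) \<le> D * (1 + 10 * \<eta>)"
    if c: "-(\<kappa> + m) \<le> c" "c \<le> \<kappa> - m" for c t
  proof -
    have "\<bar>c\<bar> \<le> \<kappa> + D"
      using c D by (simp add: abs_le_iff)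
    then have "\<bar>c\<bar> * norm (q t) \<le> \<kappa> * \<eta> + E"
      using small_q[of c "\<kappa> + D" t] by (simp add: E_def algebra_simps)
    then have c_bound: "\<bar>c\<bar> * norm (q t) \<le> E + E / 8 + E"
      using \<kappa>\<eta> by linarith
    show ?thesis
    proof (cases "t \<in> U")
      case True
      have "d t + of_real c * p * g t
          = of_real m * p + (d t - d t1) + of_real c * p * (of_real (\<rho> t) + q t)"
        using p(2) g_split[of t] by (simp add: m_def)
      also have "norm \<dots> \<le> \<kappa> + norm (d t - d t1) + \<bar>c\<bar> * norm (q t)"
        using c D E by (intro peak_perturbation_scalar p(1) \<rho>(1,2)) auto
      finally show ?thesis
        using osc[OF True] c_bound E by (simp add: D_def E_def algebra_simps)
    next
      case False
      then show ?thesis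
        using off[OF False, of c] c_bound E by linarith
    qed
  qed
  show "t \<notin> U \<Longrightarrow> norm (d t + of_real (\<kappa> - m) * p * g t) \<le> D * (1 + 2 * \<eta>)" for t
    using off[of t "\<kappa> - m"] small_q[of "\<kappa> - m" \<kappa> t] \<kappa>\<eta> D E by auto
  have "d t1 + of_real (\<kappa> - m) * p * g t1 = of_real \<kappa> * p + of_real (\<kappa> - m) * p * q t1"
    using p(2) g_split[of t1] t1(2) by (simp add: m_def algebra_simps)
  moreover have "norm (of_real \<kappa> * p) - norm (of_real (\<kappa> - m) * p * q t1)
      \<le> norm (of_real \<kappa> * p + of_real (\<kappa> - m) * p * q t1)"
    by (rule norm_diff_ineq)
  moreover have "0 \<le> \<kappa>"
    using D E by simp
  ultimately have "\<kappa> - \<bar>\<kappa> - m\<bar> * norm (q t1) \<le> norm (d t1 + of_real (\<kappa> - m) * p * g t1)"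
    using p(1) by (simp add: norm_mult del: of_real_diff)
  then show "D * (1 + 2 * \<eta>) < norm (d t1 + of_real (\<kappa> - m) * p * g t1)"
    using small_q[of "\<kappa> - m" \<kappa> t1] \<kappa>\<eta> D E by auto
qed

section \<open>Almost norming pairs for nonexpansive maps\<close>

lemma polar_form:
  fixes a :: "'f::real_normed_field"
  obtains p where "norm p = 1" "a = of_real (norm a) * p"
proof (cases "a = 0")
  case True
  then show ?thesis using that[of 1] by simp
next
  case False
  then show ?thesis using that[of "a / of_real (norm a)"] by (simp add: norm_divide)
qed

text \<open>The algebra behind the choice of \<open>\<alpha>\<close>: since \<open>\<alpha> (\<kappa> - m) = (1 - \<alpha>) (\<kappa> + m)\<close>, removing
  \<open>\<alpha> (d + (\<kappa> - m) p g)\<close> from \<open>d\<close> leaves \<open>(1 - \<alpha>) (d - (\<kappa> + m) p g)\<close>.\<close>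

lemma balanced_combination:
  fixes d g :: "'a::topological_space \<Rightarrow>\<^sub>C 'f::real_normed_field" and \<kappa> m :: real
  assumes "0 < \<kappa>"
  defines "\<alpha> \<equiv> (\<kappa> + m) / (2 * \<kappa>)"
  shows "(d - scaleF (of_real \<alpha>) (d + scaleF (of_real (\<kappa> - m) * p) g)) t
    = of_real (1 - \<alpha>) * (d t + of_real (-(\<kappa> + m)) * p * g t)"
proof -
  have "\<alpha> * (\<kappa> - m) = (1 - \<alpha>) * (\<kappa> + m)"
    using assms by (simp add: \<alpha>_def field_simps)
  then have balance: "of_real \<alpha> * of_real (\<kappa> - m) = (of_real (1 - \<alpha>) * of_real (\<kappa> + m) :: 'f)"
    by (metis of_real_mult)
  have "(d - scaleF (of_real \<alpha>) (d + scaleF (of_real (\<kappa> - m) * p) g)) t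
      = d t - of_real \<alpha> * d t - (of_real \<alpha> * of_real (\<kappa> - m)) * p * g t"
    by (simp add: algebra_simps del: of_real_diff)
  also have "\<dots> = d t - of_real \<alpha> * d t - (of_real (1 - \<alpha>) * of_real (\<kappa> + m)) * p * g t"
    by (simp only: balance)
  also have "\<dots> = of_real (1 - \<alpha>) * (d t + of_real (-(\<kappa> + m)) * p * g t)"
    by (simp add: algebra_simps)
  finally show ?thesis .
qed

text \<open>Here \<open>e = d + (\<kappa> - m) p g\<close> and
  \<open>d - \<alpha> e = (1 - \<alpha>) (d - (\<kappa> + m) p g)\<close> for \<open>\<alpha> = (\<kappa> + m) / 2\<kappa>\<close>.\<close>

lemma C_rich_peak_decomposition:
  fixes X :: "('k::topological_space \<Rightarrow>\<^sub>C 'f::real_normed_field) set"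
  assumes K: "compact (UNIV :: 'k set)" and CR: "C_rich X"
    and d: "d \<in> X" "d \<noteq> 0" and \<eta>: "0 < \<eta>" "\<eta> \<le> 1/40"
    and U: "open U" "t0 \<in> U" and osc: "\<And>t. t \<in> U \<Longrightarrow> norm (d t - d t0) < \<eta> * norm d"
  obtains e \<alpha> s where "e \<in> X" "e \<noteq> 0" "1/2 \<le> \<alpha>" "\<alpha> \<le> 1" "s \<in> U" "norm (e s) = norm e"
    "norm e \<le> norm d * (1 + 10 * \<eta>)"
    "norm (d - scaleF (of_real \<alpha>) e) \<le> (1 - \<alpha>) * (norm d * (1 + 10 * \<eta>))"
proof -
  have SX: "closed_subspaceF X"
    using CR by (simp add: C_rich_def)
  obtain g \<rho> t1 where g: "g \<in> X" and t1: "t1 \<in> U" "\<rho> t1 = 1"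
    and \<rho>: "\<And>t. 0 \<le> \<rho> t" "\<And>t. \<rho> t \<le> 1" "\<And>t. t \<notin> U \<Longrightarrow> \<rho> t = 0"
    and g_close: "\<And>t. norm (g t - of_real (\<rho> t)) < \<eta>"
    using C_rich_peak[OF K CR U(1) _ \<eta>(1)] U(2) by (metis empty_iff)
  have osc1: "norm (d t - d t1) \<le> 2 * \<eta> * norm d" if "t \<in> U" for t
    using norm_triangle_ineq4[of "d t - d t0" "d t1 - d t0"] osc[OF that] osc[OF t1(1)] by simp
  obtain p where p: "norm p = 1" "d t1 = of_real (norm (d t1)) * p"
    by (rule polar_form)
  define \<kappa> where "\<kappa> = (1 + 5 * \<eta>) * norm d"
  define m where "m = norm (d t1)"
  note est = peak_perturbation[OF \<eta> d(2) t1 \<rho> g_close osc1 p, folded \<kappa>_def m_def]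
  have \<kappa>: "0 \<le> m" "m \<le> norm d" "norm d \<le> \<kappa>" "0 < \<kappa>"
    using norm_bounded[of d t1] d(2) \<eta> by (auto simp: m_def \<kappa>_def)
  define e where "e = d + scaleF (of_real (\<kappa> - m) * p) g"
  have e_apply: "e t = d t + of_real (\<kappa> - m) * p * g t" for t
    by (simp add: e_def)
  have "norm e \<le> norm d * (1 + 10 * \<eta>)"
  proof (rule norm_bound)
    show "norm (e t) \<le> norm d * (1 + 10 * \<eta>)" for t
      unfolding e_apply using \<kappa> by (intro est(1)) auto
  qed
  moreover have e_large: "norm d * (1 + 2 * \<eta>) < norm e"
    using est(3) norm_bounded[of e t1] by (simp add: e_apply)
  moreover obtain s where s: "norm (e s) = norm e"
    using attains_norm[OF K] by blast
  moreover have "s \<in> U"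
    using est(2)[of s] e_large s by (auto simp: e_apply)
  moreover have "e \<noteq> 0"
  proof -
    have "0 < norm d * (1 + 2 * \<eta>)"
      using \<eta> d(2) by simp
    then show ?thesis using e_large by auto
  qed
  moreover have "e \<in> X"
    unfolding e_def using SX d(1) g by (intro subspace_add subspace_scale)
  moreover define \<alpha> where "\<alpha> = (\<kappa> + m) / (2 * \<kappa>)"
  moreover have "1/2 \<le> \<alpha>" "\<alpha> \<le> 1"
    using \<kappa> by (auto simp: \<alpha>_def field_simps)
  moreover have "norm (d - scaleF (of_real \<alpha>) e) \<le> (1 - \<alpha>) * (norm d * (1 + 10 * \<eta>))"
  proof -
    have pointwise: "(d - scaleF (of_real \<alpha>) e) t
        = of_real (1 - \<alpha>) * (d t + of_real (-(\<kappa> + m)) * p * g t)" for t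
      unfolding \<alpha>_def e_def using \<kappa>(4) by (rule balanced_combination)
    have bound: "norm (d t + of_real (-(\<kappa> + m)) * p * g t) \<le> norm d * (1 + 10 * \<eta>)" for t
      using \<kappa> by (intro est(1)) auto
    show ?thesis
    proof (rule norm_bound)
      show "norm ((d - scaleF (of_real \<alpha>) e) t) \<le> (1 - \<alpha>) * (norm d * (1 + 10 * \<eta>))" for t
        unfolding pointwise norm_mult norm_of_real
        using bound[of t] \<open>\<alpha> \<le> 1\<close> by (intro mult_mono) auto
    qed
  qed
  ultimately show ?thesis
    using that by blast
qed

text \<open>The final numerical inequality of the main estimate; it is where the constant 40 comes from.\<close>

lemma margin_inequality:
  fixes \<eta> \<alpha> D :: real
  assumes "0 < \<eta>" "1/2 \<le> \<alpha>" "0 < D"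
  shows "(1 - 40 * \<eta>) * (\<alpha> * (D * (1 + 10 * \<eta>)))
    \<le> (1 - 2 * \<eta>) * D - (1 - \<alpha>) * (D * (1 + 10 * \<eta>))"
proof -
  have "12 * \<eta> \<le> 40 * \<eta> * \<alpha>"
    using assms by simp
  also have "\<dots> \<le> 40 * \<eta> * \<alpha> * (1 + 10 * \<eta>)"
    using assms by (simp add: mult_left_le)
  finally have "(1 - 40 * \<eta>) * (\<alpha> * (1 + 10 * \<eta>)) \<le> (1 - 2 * \<eta>) - (1 - \<alpha>) * (1 + 10 * \<eta>)"
    by (simp add: algebra_simps)
  from mult_right_mono[OF this, of D] assms show ?thesis
    by (simp add: algebra_simps)
qed

text \<open>Take
  \<open>y = v\<close> and \<open>x = v + \<alpha> e\<close> from the decomposition of \<open>d = u - v\<close> on a neighbourhood \<open>U\<close> of a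
  norming point of \<open>T u - T v\<close>; then \<open>T x - T v\<close> is large at the norming point \<open>s \<in> U\<close> of \<open>e\<close>,
  because \<open>T u - T x\<close> is small.\<close>

lemma C_rich_almost_norming:
  fixes X :: "('k::topological_space \<Rightarrow>\<^sub>C 'f::real_normed_field) set"
    and T :: "('k \<Rightarrow>\<^sub>C 'f) \<Rightarrow> ('k \<Rightarrow>\<^sub>C 'f)"
  assumes K: "compact (UNIV :: 'k set)" and CR: "C_rich X"
    and TX: "\<And>x. x \<in> X \<Longrightarrow> T x \<in> X"
    and nonexp: "\<And>x y. x \<in> X \<Longrightarrow> y \<in> X \<Longrightarrow> norm (T x - T y) \<le> norm (x - y)"
    and uv: "u \<in> X" "v \<in> X" "u \<noteq> v" and \<eta>: "0 < \<eta>" "\<eta> \<le> 1/40"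
    and almost: "(1 - \<eta>) * norm (u - v) < norm (T u - T v)"
  shows "\<exists>x y \<phi>. x \<in> X \<and> y \<in> X \<and> x \<noteq> y \<and> \<phi> \<in> Dset X (x - y) \<and>
           1 - 40 * \<eta> \<le> norm (\<phi> (T x - T y)) / (norm (x - y))\<^sup>2"
proof -
  have SX: "closed_subspaceF X"
    using CR by (simp add: C_rich_def)
  define d where "d = u - v"
  define D where "D = norm d"
  define z where "z = T u - T v"
  have d: "d \<in> X" "d \<noteq> 0" "0 < D"
    using uv SX by (auto simp: d_def D_def subspace_diff)
  obtain t0 where t0: "norm (z t0) = norm z"
    using attains_norm[OF K] by blast
  define U where "U = {t. norm (z t - z t0) < \<eta> * D} \<inter> {t. norm (d t - d t0) < \<eta> * D}"
  have U: "open U" "t0 \<in> U"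
    using \<eta> d unfolding U_def by (auto intro!: open_Int open_Collect_less continuous_intros)
  have osc: "norm (d t - d t0) < \<eta> * norm d" if "t \<in> U" for t
    using that by (simp add: U_def D_def)
  obtain e \<alpha> s where e: "e \<in> X" "e \<noteq> 0" and \<alpha>: "1/2 \<le> \<alpha>" "\<alpha> \<le> 1"
    and s: "s \<in> U" "norm (e s) = norm e" and e_norm: "norm e \<le> D * (1 + 10 * \<eta>)"
    and approx: "norm (d - scaleF (of_real \<alpha>) e) \<le> (1 - \<alpha>) * (D * (1 + 10 * \<eta>))"
    using C_rich_peak_decomposition[OF K CR d(1,2) \<eta> U osc, folded D_def] by blast
  define x where "x = v + scaleF (of_real \<alpha>) e"
  have x: "x \<in> X" "x - v = scaleF (of_real \<alpha>) e" "u - x = d - scaleF (of_real \<alpha>) e"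
    using SX uv e by (auto simp: x_def d_def intro!: subspace_add subspace_scale)
  have xv_norm: "norm (x - v) = \<alpha> * norm e"
    using x(2) \<alpha> by (simp add: norm_scaleF)
  then have xv: "x \<noteq> v"
    using \<alpha> e(2) by auto
  have xv_peak: "norm ((x - v) s) = norm (x - v)"
    using s(2) \<alpha> by (simp add: x(2) norm_scaleF norm_mult)
  have "norm ((T u - T x) s) \<le> (1 - \<alpha>) * (D * (1 + 10 * \<eta>))"
    using norm_bounded[of "T u - T x" s] nonexp[OF uv(1) x(1)] approx unfolding x(3) by linarith
  moreover have "(1 - 2 * \<eta>) * D \<le> norm (z s)"
  proof -
    have "norm (z t0 - z s) < \<eta> * D"
      using s(1) by (simp add: U_def norm_minus_commute)
    moreover have "(1 - \<eta>) * D < norm (z t0)"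
      using almost t0 by (simp add: z_def D_def d_def)
    moreover have "(1 - 2 * \<eta>) * D = (1 - \<eta>) * D - \<eta> * D"
      by (simp add: algebra_simps)
    ultimately show ?thesis
      using norm_triangle_ineq2[of "z t0" "z s"] by linarith
  qed
  moreover have "norm (z s) \<le> norm ((T u - T x) s) + norm ((T x - T v) s)"
  proof -
    have "z s = (T u - T x) s + (T x - T v) s"
      by (simp add: z_def)
    then show ?thesis
      by (metis norm_triangle_ineq)
  qed
  ultimately have "(1 - 2 * \<eta>) * D - (1 - \<alpha>) * (D * (1 + 10 * \<eta>)) \<le> norm ((T x - T v) s)"
    by linarith
  moreover have "(1 - 40 * \<eta>) * norm (x - v) \<le> (1 - 40 * \<eta>) * (\<alpha> * (D * (1 + 10 * \<eta>)))"
    unfolding xv_norm using e_norm \<alpha> \<eta> by (intro mult_left_mono) auto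
  ultimately have "(1 - 40 * \<eta>) * norm (x - v) \<le> norm ((T x - T v) s)"
    using margin_inequality[OF \<eta>(1) \<alpha>(1) d(3)] by linarith
  then show ?thesis
    using omega_witness[OF SX x(1) uv(2) xv xv_peak] x(1) uv(2) xv by blast
qed

lemma omega_eq_one:
  fixes X :: "('k::topological_space \<Rightarrow>\<^sub>C 'f::real_normed_field) set"
  assumes K: "compact (UNIV :: 'k set)" and CR: "C_rich X"
    and T: "T \<in> Lip0 X" "lip_norm X T = 1"
  shows "omega X T = 1"
proof -
  have SX: "closed_subspaceF X"
    using CR by (simp add: C_rich_def)
  obtain g0 where g0: "g0 \<in> X" "g0 \<noteq> 0"
    using C_rich_nontrivial[OF K CR] .
  note pair = g0(1) subspace_zero[OF SX] g0(2)
  have TX: "T x \<in> X" if "x \<in> X" for x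
    using T(1) that by (auto simp: Lip0_def)
  note nonexp = lip_norm_one_nonexpansive[OF T pair]
  show ?thesis
    unfolding omega_def
  proof (rule Sup_eq_one_by_approximation)
    show "w \<le> 1" if "w \<in> {norm (\<phi> (T x - T y)) / (norm (x - y))\<^sup>2 | x y \<phi>.
        x \<in> X \<and> y \<in> X \<and> x \<noteq> y \<and> \<phi> \<in> Dset X (x - y)}" for w
      using that omega_quotient_le_one[OF SX TX nonexp] by blast
  next
    fix \<epsilon> :: real assume "0 < \<epsilon>"
    define \<eta> where "\<eta> = min \<epsilon> 1 / 40"
    have \<eta>: "0 < \<eta>" "\<eta> \<le> 1/40" "1 - \<epsilon> \<le> 1 - 40 * \<eta>"
      using \<open>0 < \<epsilon>\<close> by (auto simp: \<eta>_def)
    obtain u v where uv: "u \<in> X" "v \<in> X" "u \<noteq> v"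
      and almost: "(1 - \<eta>) * norm (u - v) < norm (T u - T v)"
      using lip_norm_one_almost_attained[OF T pair \<eta>(1)] by blast
    from C_rich_almost_norming[OF K CR TX nonexp uv \<eta>(1,2) almost] \<eta>(3)
    show "\<exists>w \<in> {norm (\<phi> (T x - T y)) / (norm (x - y))\<^sup>2 | x y \<phi>.
        x \<in> X \<and> y \<in> X \<and> x \<noteq> y \<and> \<phi> \<in> Dset X (x - y)}. 1 - \<epsilon> \<le> w"
      by fastforce
  qed
qed

text \<open>Since the identity is admissible, the infimum defining \<open>n\<^sub>L(X)\<close> is taken over \<open>{1}\<close>.\<close>

lemma nL_C_rich:
  fixes X :: "('k::topological_space \<Rightarrow>\<^sub>C 'f::real_normed_field) set"
  assumes K: "compact (UNIV :: 'k set)" and CR: "C_rich X"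
  shows "nL X = 1"
proof -
  obtain g0 where g0: "g0 \<in> X" "g0 \<noteq> 0"
    using C_rich_nontrivial[OF K CR] .
  have "0 \<in> X"
    using CR by (simp add: C_rich_def subspace_zero)
  then have "{norm (id x - id y) / norm (x - y) | x y. x \<in> X \<and> y \<in> X \<and> x \<noteq> y} = {1}"
    using g0 by auto
  then have "lip_norm X id = 1"
    by (simp add: lip_norm_def)
  moreover have "id \<in> Lip0 X"
    unfolding Lip0_def by (auto intro!: exI[of _ 1] simp: lipschitz_on_def)
  ultimately have "{omega X T | T. T \<in> Lip0 X \<and> lip_norm X T = 1} = {1}"
    using omega_eq_one[OF K CR] by (auto intro!: exI[of _ id])
  then show ?thesis
    by (simp add: nL_def)
qed

theorem corollary2p13:
  fixes XR :: "('k::t2_space \<Rightarrow>\<^sub>C real) set"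
    and XC :: "('k \<Rightarrow>\<^sub>C complex) set"
  assumes "compact (UNIV :: 'k set)"
  shows "(C_rich XR \<longrightarrow> nL XR = 1) \<and> (C_rich XC \<longrightarrow> nL XC = 1)"
  using nL_C_rich[OF assms, of XR] nL_C_rich[OF assms, of XC] by blast

end
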